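(* Let $r$ be a positive integer and let $$h(X)=\sum_{0\le i<(q+1)/d,\ 0\le j<d}a_{ij}X^{i+j(q+1)/d}\in\mathbb F_{q^2}[X],\qquad M_{ik}=\sum_{j=0}^{d-1}a_{ij}\epsilon^{jk}\ \ (0\le i<(q+1)/d,\ 0\le k<d).$$ Then $X^rh(X^{q-1})$ is a permutation polynomial of $\mathbb F_{q^2}$ such that, for every $0\le k<d$, the function $x\mapsto x^rh(x)^{q-1}$ restricted to $A_k$ is of the form $x\mapsto c_kx^{n_k}$ for some $c_k\in\mathbb F_{q^2}$ and integer $n_k$, if and only if the following three conditions hold: (i) for each $0\le k<d$ there exist integers $s_k,t_k\ge0$ with $s_k+t_k<(q+1)/d$, an element $\pi(k)\in\mathbb Z/d\mathbb Z$, an element $\lambda_k\in A_{\pi(k)}$, and an integer $\tau_k\in\{0\}\cup[(q+1)/d-t_k,\,t_k]$, such that $\sum_iM_{ik}X^i=X^{s_k}L_k(X)$ with $L_k\in\mathcal L_k(t_k,\tau_k;\lambda_k)$; (ii) $\gcd(r,q-1)=1$ and $\gcd(e_k,(q+1)/d)=1$ for all $0\le k<d$, where $e_k=r-2s_k-t_k+\tau_k$; (iii) the map $k\mapsto\pi(k)+e_kk$ permutes $\mathbb Z/d\mathbb Z$.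
   Context: $q$ is a prime power, $d$ is a positive divisor of $q+1$, and $\epsilon\in\mathbb F_{q^2}^*$ has multiplicative order $d$. $\mu_m$ denotes the subgroup of order $m$ of $\mathbb F_{q^2}^*$. For $0\le k<d$ (indices read mod $d$), $A_k=\{x\in\mu_{q+1}: x^{(q+1)/d}=\epsilon^k\}$. For $a\in\mathbb F_{q^2}$, $\bar a=a^q$; for $f(X)=\sum_{i=0}^n a_iX^i\in\mathbb F_{q^2}[X]$ with $a_n\neq0$, $\tilde f(X)=\sum_{i=0}^n\bar a_iX^{n-i}$. For $0\le k<d$, $0\le t<(q+1)/d$ and $\lambda\in\mu_{q+1}$: $\mathcal L_k(t,0;\lambda)$ is the set of $L\in\mathbb F_{q^2}[X]$ with $\deg L=t$, $\tilde L=\lambda L$ and $\gcd(L,X^{(q+1)/d}-\epsilon^k)=1$; and for an integer $\tau$ with $(q+1)/d-t\le\tau\le t$, $\mathcal L_k(t,\tau;\lambda)$ is the set of polynomials $L=P+X^{(q+1)/d-\tau}Q$ with $P,Q\in\mathbb F_{q^2}[X]$, $\deg P=t-\tau$, $\tilde P=\lambda P$, $\deg Q=\tau+t-(q+1)/d$, $\tilde Q=\lambda\epsilon^kQ$, and $\gcd(L,X^{(q+1)/d}-\epsilon^k)=1$. *)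

theory Defs
  imports "HOL-Computational_Algebra.Computational_Algebra" "HOL-Library.Cardinality"
begin

definition is_prime_power :: "nat \<Rightarrow> bool" where
  "is_prime_power q \<longleftrightarrow> (\<exists>p k. prime p \<and> k > 0 \<and> q = p ^ k)"

definition has_mult_order :: "'a::field \<Rightarrow> nat \<Rightarrow> bool" where
  "has_mult_order e n \<longleftrightarrow> n > 0 \<and> e ^ n = 1 \<and> (\<forall>j. 0 < j \<and> j < n \<longrightarrow> e ^ j \<noteq> 1)"

definition mu :: "nat \<Rightarrow> 'a::field set" where
  "mu n = {x. x \<noteq> 0 \<and> x ^ n = 1}"

definition Aset :: "nat \<Rightarrow> nat \<Rightarrow> 'a::field \<Rightarrow> nat \<Rightarrow> 'a set" where
  "Aset q d eps k = {x \<in> mu (q + 1). x ^ ((q + 1) div d) = eps ^ k}"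

text \<open>Conjugation bar a = a^q and the conjugate-reciprocal f tilde.\<close>
definition ptilde :: "nat \<Rightarrow> 'a::field poly \<Rightarrow> 'a poly" where
  "ptilde q f = (\<Sum>i\<le>degree f. monom ((coeff f i) ^ q) (degree f - i))"

definition Lset :: "nat \<Rightarrow> nat \<Rightarrow> 'a::field_gcd \<Rightarrow> nat \<Rightarrow> nat \<Rightarrow> nat \<Rightarrow> 'a \<Rightarrow> 'a poly set" where
  "Lset q d eps k t \<tau> lam =
    (let m = (q + 1) div d; g = monom 1 m - [:eps ^ k:] in
     if \<tau> = 0 then
       {L. L \<noteq> 0 \<and> degree L = t \<and> ptilde q L = smult lam L \<and> gcd L g = 1}
     else
       {L. \<exists>P Q. L = P + monom 1 (m - \<tau>) * Q \<and>
             P \<noteq> 0 \<and> degree P = t - \<tau> \<and> ptilde q P = smult lam P \<and>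
             Q \<noteq> 0 \<and> degree Q = \<tau> + t - m \<and> ptilde q Q = smult (lam * eps ^ k) Q \<and>
             gcd L g = 1})"

definition permutation_poly :: "'a::field poly \<Rightarrow> bool" where
  "permutation_poly f \<longleftrightarrow> bij (poly f)"

end

theory Submission
  imports Defs
begin

text \<open>By the criterion of Park--Lee and Zieve, X^r h(X^(q-1)) permutes the field of order q^2 iff
  gcd(r, q-1) = 1, h has no root on the group of (q+1)-th roots of unity, and
  g(y) = y^r h(y)^(q-1) is injective on that group. It is the disjoint union of the d cosets A k of
  the m-th roots of unity, and on A k, where y^m = eps^k, h agrees with N_k = sum_i M_ik X^i, a
  polynomial of degree < m = |A k|. Since y^q = 1/y there, g is a monomial on A k iff the reversed
  conjugate of N_k agrees on A k with a monomial multiple of N_k; both sides have degree < m, so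
  comparing coefficients gives exactly the decomposition N_k = X^s_k L_k of condition (i), and then
  g(y) = lam_k y^e_k on A k. Such a piecewise monomial maps A k into A (pi(k) + e_k k), and it is
  injective iff every e_k is prime to m and k \<mapsto> pi(k) + e_k k permutes Z/d.\<close>

section \<open>Roots of unity in finite fields\<close>

lemma of_nat_card_eq_0: "of_nat CARD('a::{finite,comm_ring_1}) = (0::'a)"
proof -
  have "(\<Sum>x\<in>(UNIV::'a set). x) = (\<Sum>x\<in>UNIV. x + 1)"
    by (rule sum.reindex_bij_witness[of _ "\<lambda>y. y + 1" "\<lambda>y. y - 1"]) auto
  also have "\<dots> = (\<Sum>x\<in>UNIV. x) + of_nat CARD('a)" by (simp add: sum.distrib)
  finally show ?thesis by (metis add_cancel_right_right)
qed

lemma CHAR_dvd_card: "CHAR('a::{finite,comm_ring_1}) dvd CARD('a)"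
  using of_nat_card_eq_0[where 'a='a] of_nat_eq_0_iff_char_dvd by blast

lemma prime_CHAR_finite_field: "prime CHAR('a::{finite,field})"
  by (rule prime_CHAR_semidom) (use finite_imp_CHAR_pos[OF finite] in auto)

lemma card_finite_field_ge_2: "CARD('a::{finite,field}) \<ge> 2"
proof -
  have "card {0, 1::'a} \<le> CARD('a)" by (rule card_mono) auto
  then show ?thesis by simp
qed

lemma power_card_finite_field: "(x::'a::{finite,field}) ^ CARD('a) = x"
proof (cases "x = 0")
  case False
  have "x * (\<Prod>y\<in>UNIV-{0}. x * y) = x * x ^ (CARD('a) - 1) * \<Prod>(UNIV-{0})"
    by (simp add: prod.distrib mult_ac)
  also have "x * x ^ (CARD('a) - 1) = x ^ CARD('a)"
    using card_finite_field_ge_2[where 'a='a] by (simp flip: power_Suc)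
  also have "(\<Prod>y\<in>UNIV-{0}. x * y) = (\<Prod>y\<in>UNIV-{0}. y)"
    by (rule prod.reindex_bij_witness[of _ "\<lambda>y. y / x" "\<lambda>y. x * y"]) (use False in auto)
  finally show ?thesis by simp
qed (use card_finite_field_ge_2[where 'a='a] in auto)

lemma power_card_minus_1_finite_field:
  "(x::'a::{finite,field}) \<noteq> 0 \<Longrightarrow> x ^ (CARD('a) - 1) = 1"
proof -
  assume "x \<noteq> 0"
  have "x * x ^ (CARD('a) - 1) = x ^ CARD('a)"
    using card_finite_field_ge_2[where 'a='a] by (simp flip: power_Suc)
  then have "x * x ^ (CARD('a) - 1) = x * 1" by (simp add: power_card_finite_field)
  then show ?thesis using \<open>x \<noteq> 0\<close> by simp
qed

lemma card_power_eq_le: "n > 0 \<Longrightarrow> card {x::'a::idom. x ^ n = c} \<le> n"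
proof -
  assume n: "n > 0"
  define P where "P = monom (1::'a) n - [:c:]"
  have "coeff P n = 1" using n unfolding P_def by (simp add: coeff_pCons split: nat.split)
  then have "P \<noteq> 0" by auto
  moreover have "degree P \<le> n" unfolding P_def by (intro degree_diff_le) (auto simp: degree_monom_eq)
  moreover have "{x. x ^ n = c} = {x. poly P x = 0}" by (auto simp: P_def poly_monom)
  ultimately show ?thesis using card_poly_roots_bound[of P] by simp
qed

lemma power_gcd_eq_1:
  fixes z :: "'b::monoid_mult"
  shows "z ^ a = 1 \<Longrightarrow> z ^ b = 1 \<Longrightarrow> z ^ gcd a b = 1"
proof (induction a b rule: gcd_nat_induct)
  case (step m n)
  have "z ^ m = (z ^ n) ^ (m div n) * z ^ (m mod n)"
    by (metis div_mult_mod_eq power_add power_mult mult.commute)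
  then have "z ^ (m mod n) = 1" using step.prems by simp
  then have "z ^ gcd n (m mod n) = 1" using step.IH step.prems by simp
  then show ?case by (metis gcd_red_nat)
qed simp

lemma power_eq_1_dvd: "(z::'b::monoid_mult) ^ a = 1 \<Longrightarrow> a dvd b \<Longrightarrow> z ^ b = 1"
  by (metis dvd_def power_mult power_one)

text \<open>The fibres of x \<mapsto> x^e on the nonzero elements are cosets of the e-th roots of unity.\<close>
lemma card_nonzero_le_card_image_power:
  "card (UNIV - {0::'a::{finite,field}}) \<le> card ((\<lambda>x::'a. x ^ e) ` (UNIV - {0})) * card {z::'a. z ^ e = 1}"
proof -
  define S where "S = UNIV - {0::'a}"
  have fibre: "card {x\<in>S. x ^ e = y} \<le> card {z::'a. z ^ e = 1}" if y: "y \<in> (\<lambda>x. x ^ e) ` S" for y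
  proof -
    obtain x0 where x0: "x0 \<in> S" "x0 ^ e = y" using y by blast
    have "{x\<in>S. x ^ e = y} \<subseteq> (\<lambda>z. x0 * z) ` {z. z ^ e = 1}"
    proof
      fix x assume "x \<in> {x\<in>S. x ^ e = y}"
      then have "(x / x0) ^ e = 1" "x = x0 * (x / x0)" using x0 by (auto simp: S_def power_divide)
      then show "x \<in> (\<lambda>z. x0 * z) ` {z. z ^ e = 1}" by blast
    qed
    then have "card {x\<in>S. x ^ e = y} \<le> card ((\<lambda>z. x0 * z) ` {z::'a. z ^ e = 1})"
      by (intro card_mono) auto
    also have "\<dots> \<le> card {z::'a. z ^ e = 1}" by (rule card_image_le) simp
    finally show ?thesis .
  qed
  have "S = (\<Union>y\<in>(\<lambda>x. x ^ e) ` S. {x\<in>S. x ^ e = y})" by auto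
  then have "card S \<le> (\<Sum>y\<in>(\<lambda>x. x ^ e) ` S. card {x\<in>S. x ^ e = y})"
    by (metis card_UN_le finite finite_imageI)
  also have "\<dots> \<le> (\<Sum>y\<in>(\<lambda>x. x ^ e) ` S. card {z::'a. z ^ e = 1})" by (intro sum_mono fibre)
  finally show ?thesis by (simp add: S_def)
qed

lemma card_roots_of_unity:
  assumes "n dvd CARD('a::{finite,field}) - 1"
  shows "card {x::'a. x ^ n = 1} = n"
proof -
  obtain k where k: "CARD('a) - 1 = n * k" using assms by blast
  moreover have "CARD('a) - 1 \<noteq> 0" using card_finite_field_ge_2[where 'a='a] by simp
  ultimately have pos: "n > 0" "k > 0" by auto
  have "(x ^ n) ^ k = 1" if "x \<noteq> 0" for x :: 'a
    using power_card_minus_1_finite_field[OF that] by (metis k power_mult)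
  then have "(\<lambda>x::'a. x ^ n) ` (UNIV - {0}) \<subseteq> {y. y ^ k = 1}" by auto
  then have "card ((\<lambda>x::'a. x ^ n) ` (UNIV - {0})) \<le> card {y::'a. y ^ k = 1}"
    by (intro card_mono) auto
  also have "\<dots> \<le> k" using card_power_eq_le[OF pos(2)] .
  finally have "card ((\<lambda>x::'a. x ^ n) ` (UNIV - {0})) * card {x::'a. x ^ n = 1}
      \<le> k * card {x::'a. x ^ n = 1}" by (rule mult_le_mono1)
  moreover have "n * k \<le> card ((\<lambda>x::'a. x ^ n) ` (UNIV - {0})) * card {x::'a. x ^ n = 1}"
    using card_nonzero_le_card_image_power[of n, where 'a='a] k by (simp add: card_Diff_singleton)
  ultimately have "k * n \<le> k * card {x::'a. x ^ n = 1}" by (simp only: mult.commute[of n k])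
  then have "n \<le> card {x::'a. x ^ n = 1}" using pos(2) by simp
  then show ?thesis using card_power_eq_le[OF pos(1), of "1::'a"] by simp
qed

lemma image_power_nonzero_eq_roots_of_unity:
  assumes "e * k = CARD('a::{finite,field}) - 1"
  shows "(\<lambda>x::'a. x ^ e) ` (UNIV - {0}) = {y. y ^ k = 1}"
proof (rule card_subset_eq)
  have "CARD('a) - 1 \<noteq> 0" using card_finite_field_ge_2[where 'a='a] by simp
  then have "e * k \<noteq> 0" using assms by simp
  then have pos: "e > 0" "k > 0" by auto
  have "(x ^ e) ^ k = 1" if "x \<noteq> 0" for x :: 'a
    using power_card_minus_1_finite_field[OF that] by (metis assms power_mult)
  then show sub: "(\<lambda>x::'a. x ^ e) ` (UNIV - {0}) \<subseteq> {y. y ^ k = 1}" by auto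
  have "card {z::'a. z ^ e = 1} = e"
    using assms by (intro card_roots_of_unity) (metis dvd_triv_left)
  then have "e * k \<le> card ((\<lambda>x::'a. x ^ e) ` (UNIV - {0})) * e"
    using card_nonzero_le_card_image_power[of e, where 'a='a] by (simp add: assms card_Diff_singleton)
  then have "k \<le> card ((\<lambda>x::'a. x ^ e) ` (UNIV - {0}))" using pos by (simp add: mult.commute)
  moreover have "card ((\<lambda>x::'a. x ^ e) ` (UNIV - {0})) \<le> card {y::'a. y ^ k = 1}"
    using sub by (intro card_mono) auto
  moreover have "card {y::'a. y ^ k = 1} = k"
    using assms by (intro card_roots_of_unity) (metis dvd_triv_right)
  ultimately show "card ((\<lambda>x::'a. x ^ e) ` (UNIV - {0})) = card {y::'a. y ^ k = 1}" by linarith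
qed simp

lemma inj_on_power_roots_of_unity_iff:
  assumes "n dvd CARD('a::{finite,field}) - 1"
  shows "inj_on (\<lambda>x. x ^ e) {x::'a. x ^ n = 1} \<longleftrightarrow> coprime e n"
proof
  assume inj: "inj_on (\<lambda>x. x ^ e) {x::'a. x ^ n = 1}"
  have "gcd e n dvd CARD('a) - 1" using assms dvd_trans by blast
  then have "card {x::'a. x ^ gcd e n = 1} = gcd e n" by (rule card_roots_of_unity)
  moreover have "{x::'a. x ^ gcd e n = 1} \<subseteq> {1}"
  proof
    fix z :: 'a assume "z \<in> {x. x ^ gcd e n = 1}"
    then have "z ^ e = 1" "z ^ n = 1" by (auto elim: power_eq_1_dvd)
    then show "z \<in> {1}" using inj by (auto dest: inj_onD[of _ _ z 1])
  qed
  then have "card {x::'a. x ^ gcd e n = 1} \<le> card {1::'a}" by (intro card_mono) auto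
  ultimately have "gcd e n \<le> 1" by simp
  moreover have "n \<noteq> 0" using assms card_finite_field_ge_2[where 'a='a] by (intro notI) simp
  ultimately show "coprime e n" by (simp add: coprime_iff_gcd_eq_1 le_Suc_eq)
next
  assume cop: "coprime e n"
  show "inj_on (\<lambda>x. x ^ e) {x::'a. x ^ n = 1}"
  proof (rule inj_onI)
    fix x y :: 'a assume xy: "x \<in> {x. x ^ n = 1}" "y \<in> {x. x ^ n = 1}" "x ^ e = y ^ e"
    have "n \<noteq> 0" using assms card_finite_field_ge_2[where 'a='a] by (intro notI) simp
    then have "y \<noteq> 0" using xy(2) by (auto simp: power_0_left)
    then have "(x / y) ^ gcd e n = 1" using xy by (intro power_gcd_eq_1) (auto simp: power_divide)
    then show "x = y" using cop \<open>y \<noteq> 0\<close> by (simp add: coprime_iff_gcd_eq_1)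
  qed
qed

lemma power_roots_of_unity_surj:
  assumes "n dvd CARD('a::{finite,field}) - 1" "coprime e n" "(w::'a) ^ n = 1"
  shows "\<exists>u. u ^ n = 1 \<and> u ^ e = w"
proof -
  have "(\<lambda>u. u ^ e) ` {u::'a. u ^ n = 1} \<subseteq> {u. u ^ n = 1}"
    by (auto simp flip: power_mult simp: mult.commute[of e]) (simp add: power_mult)
  moreover have "inj_on (\<lambda>u. u ^ e) {u::'a. u ^ n = 1}"
    using inj_on_power_roots_of_unity_iff assms(1,2) by blast
  ultimately have "(\<lambda>u. u ^ e) ` {u::'a. u ^ n = 1} = {u. u ^ n = 1}"
    by (intro endo_inj_surj) auto
  then show ?thesis using assms(3) by (metis (mono_tags, lifting) image_iff mem_Collect_eq)
qed

section \<open>Exponent arithmetic\<close>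

lemma coprime_nat_mod_iff:
  assumes "m dvd n" "n > 0"
  shows "coprime (nat (e mod int n)) m \<longleftrightarrow> gcd e (int m) = 1"
proof -
  have "m > 0" using assms dvd_pos_nat by blast
  have "int (nat (e mod int n)) = e mod int n" using assms(2) by simp
  then have "coprime (nat (e mod int n)) m \<longleftrightarrow> coprime (e mod int n) (int m)"
    by (metis coprime_int_iff)
  also have "\<dots> \<longleftrightarrow> coprime (e mod int n mod int m) (int m)"
    using \<open>m > 0\<close> by (simp add: coprime_mod_left_iff)
  also have "e mod int n mod int m = e mod int m"
    using assms(1) by (simp add: mod_mod_cancel)
  also have "coprime (e mod int m) (int m) \<longleftrightarrow> coprime e (int m)"
    using \<open>m > 0\<close> by (simp add: coprime_mod_left_iff)
  finally show ?thesis by (simp add: coprime_iff_gcd_eq_1)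
qed

lemma of_nat_mod_nat_mod:
  assumes "d dvd n" "n > 0"
  shows "int ((p + nat (e mod int n) * k) mod d) = (int p + e * int k) mod int d"
proof -
  have "int (nat (e mod int n)) = e mod int n" using assms(2) by simp
  then have "int ((p + nat (e mod int n) * k) mod d) = (int p + (e mod int n) * int k) mod int d"
    by (simp add: of_nat_mod)
  also have "\<dots> = (int p + (e mod int n) * int k mod int d) mod int d"
    by (simp add: mod_add_right_eq)
  also have "(e mod int n) * int k mod int d = (e mod int n mod int d) * int k mod int d"
    by (simp add: mod_mult_left_eq)
  also have "e mod int n mod int d = e mod int d" using assms by (simp add: mod_mod_cancel)
  also have "(e mod int d) * int k mod int d = e * int k mod int d" by (simp add: mod_mult_left_eq)
  finally show ?thesis by (simp add: mod_add_right_eq)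
qed

lemma bij_betw_of_nat_lessThan_iff:
  assumes "\<And>k. k < d \<Longrightarrow> f k < d"
  shows "bij_betw (\<lambda>k. int (f k)) {..<d} {0..<int d} \<longleftrightarrow> inj_on f {..<d}"
proof -
  have "inj_on (\<lambda>k. int (f k)) {..<d} \<longleftrightarrow> inj_on f {..<d}" by (simp add: inj_on_def)
  moreover have "(\<lambda>k. int (f k)) ` {..<d} = {0..<int d}" if "inj_on f {..<d}"
  proof (rule card_subset_eq)
    show "(\<lambda>k. int (f k)) ` {..<d} \<subseteq> {0..<int d}" using assms by auto
    show "card ((\<lambda>k. int (f k)) ` {..<d}) = card {0..<int d}"
      using that by (simp add: card_image inj_on_def)
  qed simp
  ultimately show ?thesis by (auto simp: bij_betw_def)
qed

lemma power_int_div_mod: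
  assumes "(x::'a::field) \<noteq> 0" "n > 0"
  shows "power_int x e = power_int (x ^ n) (e div int n) * x ^ nat (e mod int n)"
proof -
  have "power_int x e = power_int x (int n * (e div int n) + e mod int n)"
    by (simp only: mult_div_mod_eq)
  also have "\<dots> = power_int x (int n * (e div int n)) * power_int x (e mod int n)"
    by (rule power_int_add) (simp add: assms(1))
  also have "power_int x (int n * (e div int n)) = power_int (power_int x (int n)) (e div int n)"
    by (rule power_int_mult)
  also have "power_int x (e mod int n) = x ^ nat (e mod int n)"
    using assms(2) by (simp add: power_int_def)
  finally show ?thesis by simp
qed

lemma power_int_mod_eq:
  assumes "(x::'a::field) \<noteq> 0" "x ^ n = 1" "n > 0"
  shows "power_int x e = x ^ nat (e mod int n)"
  using power_int_div_mod[OF assms(1,3)] assms(2) by simp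

section \<open>Reversed conjugate polynomials\<close>

lemma coeff_ptilde:
  "coeff (ptilde q f) i = (if i \<le> degree f then coeff f (degree f - i) ^ q else 0)"
proof -
  have "coeff (ptilde q f) i = (\<Sum>j\<in>{..degree f}. if degree f - j = i then coeff f j ^ q else 0)"
    unfolding ptilde_def by (simp add: coeff_sum coeff_monom)
  also have "\<dots> = (\<Sum>j\<in>{j\<in>{..degree f}. degree f - j = i}. coeff f j ^ q)"
    by (rule sum.inter_filter[symmetric]) simp
  also have "{j\<in>{..degree f}. degree f - j = i} = (if i \<le> degree f then {degree f - i} else {})"
    by auto
  finally show ?thesis by auto
qed

lemma degree_ptilde_le: "degree (ptilde q f) \<le> degree f"
  by (rule degree_le) (auto simp: coeff_ptilde)

lemma poly_cutoff_plus_shift: "(p::'a::comm_semiring_1 poly) = poly_cutoff n p + monom 1 n * poly_shift n p"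
  by (rule poly_eqI) (auto simp: coeff_poly_cutoff coeff_poly_shift coeff_monom_mult)

lemma poly_eq_monom_times_nonvanishing_at_0:
  assumes "(N::'a::field poly) \<noteq> 0"
  obtains s L where "N = monom 1 s * L" "coeff L 0 \<noteq> 0"
proof -
  obtain L where "N = [:0, 1:] ^ order 0 N * L" "\<not> [:0, 1:] dvd L"
    using order_decomp[OF assms, of 0] by auto
  moreover have "[:0, 1:] ^ order 0 N = monom (1::'a) (order 0 N)" by (simp add: monom_altdef)
  ultimately show ?thesis using that by (simp add: dvd_iff_poly_eq_0 poly_0_coeff_0)
qed

text \<open>Writing L = P + X^(m-j) Q with deg P < m - j, the hypothesis says that the reversed
  conjugate of L is c (X^j P + e Q); comparing coefficients pins down the degrees of P and Q
  and shows that both are self-reciprocal up to a constant.\<close>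
context
  fixes L :: "'a::field poly" and q j m :: nat and c e :: 'a
  assumes j: "0 < j" "j < m" and deg_L: "degree L < m" and L0: "coeff L 0 \<noteq> 0"
    and ptilde_L: "ptilde q L = smult c (monom 1 j * poly_cutoff (m - j) L + smult e (poly_shift (m - j) L))"
begin

private abbreviation (input) "t \<equiv> degree L"
private abbreviation (input) "P \<equiv> poly_cutoff (m - j) L"
private abbreviation (input) "Q \<equiv> poly_shift (m - j) L"

private lemma coeff_ptilde_split:
  "coeff (ptilde q L) i = c * ((if i < j then 0 else coeff P (i - j)) + e * coeff Q i)"
  using ptilde_L by (simp add: coeff_monom_mult)

private lemma coeff_P: "coeff P i = (if i < m - j then coeff L i else 0)"
  by (simp add: coeff_poly_cutoff)

private lemma coeff_Q: "coeff Q i = coeff L (i + (m - j))"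
  by (simp add: coeff_poly_shift)

private lemma coeff_L_beyond: "t < i \<Longrightarrow> coeff L i = 0"
  by (simp add: coeff_eq_0)

private lemma coeff_ptilde_ends: "coeff (ptilde q L) 0 \<noteq> 0" "coeff (ptilde q L) t \<noteq> 0"
  using L0 leading_coeff_neq_0[of L] by (auto simp: coeff_ptilde)

lemma ptilde_split_degrees:
  shows "c \<noteq> 0" "m - j \<le> t" "j \<le> t" "P \<noteq> 0" "degree P = t - j" "Q \<noteq> 0" "degree Q = j + t - m"
proof -
  show c0: "c \<noteq> 0" using coeff_ptilde_ends(1) coeff_ptilde_split[of 0] by auto
  have "coeff Q 0 \<noteq> 0" using coeff_ptilde_ends(1) coeff_ptilde_split[of 0] j by auto
  then show mjt: "m - j \<le> t" using coeff_Q coeff_L_beyond by (metis add_0 not_le)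
  show jt: "j \<le> t"
  proof (rule ccontr)
    assume "\<not> j \<le> t"
    then show False using coeff_ptilde_ends(2) coeff_ptilde_split[of t] coeff_Q coeff_L_beyond j by simp
  qed
  have P_top: "coeff P (t - j) \<noteq> 0"
    using coeff_ptilde_ends(2) coeff_ptilde_split[of t] coeff_Q coeff_L_beyond j jt by auto
  then show "P \<noteq> 0" by auto
  have "coeff P i = 0" if "t - j < i" for i
  proof -
    have "coeff (ptilde q L) (i + j) = 0" using that jt by (simp add: coeff_ptilde)
    moreover have "coeff Q (i + j) = 0" using coeff_Q coeff_L_beyond that jt j by simp
    ultimately show ?thesis using coeff_ptilde_split[of "i + j"] c0 by simp
  qed
  then show "degree P = t - j" using P_top by (meson degree_le le_antisym le_degree)
  have Q_top: "coeff Q (j + t - m) \<noteq> 0" using coeff_Q mjt j L0 leading_coeff_neq_0[of L] by auto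
  then show "Q \<noteq> 0" by auto
  have "coeff Q i = 0" if "j + t - m < i" for i using coeff_Q coeff_L_beyond that j by simp
  then show "degree Q = j + t - m" using Q_top by (meson degree_le le_antisym le_degree)
qed

lemma ptilde_cutoff_reciprocal: "ptilde q P = smult c P"
proof (rule poly_eqI)
  note degs = ptilde_split_degrees
  fix i
  show "coeff (ptilde q P) i = coeff (smult c P) i"
  proof (cases "i \<le> t - j")
    case True
    moreover have "t - (i + j) < m - j" using degs deg_L True by arith
    ultimately have "coeff (ptilde q P) i = coeff L (t - (i + j)) ^ q"
      using degs by (simp add: coeff_ptilde coeff_P add.commute)
    also have "\<dots> = coeff (ptilde q L) (i + j)" using True degs by (simp add: coeff_ptilde)
    also have "\<dots> = c * coeff P i" using coeff_ptilde_split[of "i + j"] coeff_Q coeff_L_beyond deg_L by simp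
    finally show ?thesis by simp
  next
    case False
    then show ?thesis using degs coeff_eq_0[of P i] by (simp add: coeff_ptilde)
  qed
qed

lemma ptilde_shift_reciprocal: "ptilde q Q = smult (c * e) Q"
proof (rule poly_eqI)
  note degs = ptilde_split_degrees
  fix i
  show "coeff (ptilde q Q) i = coeff (smult (c * e) Q) i"
  proof (cases "i \<le> j + t - m")
    case True
    then have "coeff (ptilde q Q) i = coeff L (t - i) ^ q" using degs j by (simp add: coeff_ptilde coeff_Q)
    also have "\<dots> = coeff (ptilde q L) i" using True j by (simp add: coeff_ptilde)
    also have "\<dots> = c * e * coeff Q i" using coeff_ptilde_split[of i] True deg_L j by simp
    finally show ?thesis by simp
  next
    case False
    then show ?thesis using degs coeff_eq_0[of Q i] by (simp add: coeff_ptilde)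
  qed
qed

end

section \<open>The criterion of Park--Lee and Zieve\<close>

lemma power_twisted_monomial:
  "((x::'a::comm_monoid_mult) ^ r * H (x ^ n)) ^ n = (x ^ n) ^ r * H (x ^ n) ^ n"
  by (simp only: power_mult_distrib power_mult[symmetric] mult.commute[of r])

lemma twisted_monomial_scale:
  "(u::'a::comm_monoid_mult) ^ n = 1 \<Longrightarrow> (u * x) ^ r * H ((u * x) ^ n) = u ^ r * (x ^ r * H (x ^ n))"
  by (simp add: power_mult_distrib mult.assoc)

locale finite_field_square =
  fixes q :: nat and field_type :: "'a::{finite,field_gcd} itself"
  assumes prime_power: "is_prime_power q" and card_field: "CARD('a) = q ^ 2"
begin

lemma q_ge_2: "q \<ge> 2"
proof -
  obtain p k where "prime p" "k > 0" "q = p ^ k" using prime_power unfolding is_prime_power_def by blast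
  then show ?thesis using prime_ge_2_nat[of p] self_le_power[of p k] by simp
qed

lemma card_minus_1: "CARD('a) - 1 = (q - 1) * (q + 1)"
  using q_ge_2 card_field by (cases q) (auto simp: power2_eq_square algebra_simps)

lemma q_is_power_of_CHAR: "\<exists>k. q = CHAR('a) ^ k"
proof -
  obtain p k where pk: "prime p" "k > 0" "q = p ^ k" using prime_power unfolding is_prime_power_def by blast
  have "CHAR('a) dvd (p ^ k) ^ 2" using CHAR_dvd_card[where 'a='a] card_field pk(3) by simp
  then have "CHAR('a) dvd p" using prime_CHAR_finite_field[where 'a='a] prime_dvd_power_nat by blast
  then have "CHAR('a) = p" using prime_CHAR_finite_field[where 'a='a] pk(1) primes_dvd_imp_eq by blast
  then show ?thesis using pk(3) by blast
qed

lemma frobenius_add: "((x::'a) + y) ^ q = x ^ q + y ^ q"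
  using q_is_power_of_CHAR freshmans_dream'[OF prime_CHAR_finite_field] by blast

lemma frobenius_sum: "(sum (f :: _ \<Rightarrow> 'a) A) ^ q = (\<Sum>i\<in>A. f i ^ q)"
  using q_is_power_of_CHAR freshmans_dream_sum'[OF prime_CHAR_finite_field] by blast

lemma dvd_card_minus_1: "q - 1 dvd CARD('a) - 1" "q + 1 dvd CARD('a) - 1"
  unfolding card_minus_1 by (rule dvd_triv_left, rule dvd_triv_right)

lemma card_unit_circle: "card {y::'a. y ^ (q + 1) = 1} = q + 1"
  using dvd_card_minus_1(2) by (rule card_roots_of_unity)

lemma image_power_q_minus_1: "(\<lambda>x::'a. x ^ (q - 1)) ` (UNIV - {0}) = {y. y ^ (q + 1) = 1}"
  by (rule image_power_nonzero_eq_roots_of_unity) (use card_minus_1 in simp)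

lemma unit_circle_power_q_minus_1:
  assumes "(y::'a) ^ (q + 1) = 1" obtains x where "x \<noteq> 0" "x ^ (q - 1) = y"
proof -
  have "y \<in> (\<lambda>x. x ^ (q - 1)) ` (UNIV - {0})" using assms image_power_q_minus_1 by simp
  then show ?thesis using that by auto
qed

lemma power_q_minus_1_unit_circle: "(x::'a) \<noteq> 0 \<Longrightarrow> (x ^ (q - 1)) ^ (q + 1) = 1"
  using image_power_q_minus_1 by blast

lemma poly_ptilde_unit_circle:
  assumes "(x::'a) ^ (q + 1) = 1"
  shows "poly (ptilde q f) x = x ^ degree f * poly f x ^ q"
proof -
  define n where "n = degree f"
  have "poly (ptilde q f) x = (\<Sum>i\<le>n. coeff f i ^ q * x ^ (n - i))"
    unfolding ptilde_def n_def by (simp add: poly_sum poly_monom)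
  also have "\<dots> = (\<Sum>i\<le>n. x ^ n * (coeff f i * x ^ i) ^ q)"
  proof (rule sum.cong)
    fix i assume "i \<in> {..n}"
    then have "x ^ n = x ^ (n - i) * x ^ i" by (simp flip: power_add)
    moreover have "x ^ i * (x ^ i) ^ q = (x * x ^ q) ^ i"
      by (metis power_mult power_mult_distrib mult.commute)
    moreover have "x * x ^ q = 1" using assms by simp
    ultimately show "coeff f i ^ q * x ^ (n - i) = x ^ n * (coeff f i * x ^ i) ^ q"
      by (simp add: power_mult_distrib algebra_simps)
  qed simp
  also have "\<dots> = x ^ n * poly f x ^ q"
    by (simp add: sum_distrib_left frobenius_sum poly_altdef n_def)
  finally show ?thesis unfolding n_def .
qed

lemma zieve_necessary_coprime:
  assumes "inj (\<lambda>x::'a. x ^ r * H (x ^ (q - 1)))"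
  shows "coprime r (q - 1)"
proof -
  have "inj_on (\<lambda>z::'a. z ^ r) {z. z ^ (q - 1) = 1}"
  proof (rule inj_onI)
    fix z w :: 'a assume "z \<in> {z. z ^ (q - 1) = 1}" "w \<in> {z. z ^ (q - 1) = 1}" "z ^ r = w ^ r"
    then have "z ^ r * H (z ^ (q - 1)) = w ^ r * H (w ^ (q - 1))" by simp
    then show "z = w" by (rule injD[OF assms])
  qed
  then show ?thesis using inj_on_power_roots_of_unity_iff[OF dvd_card_minus_1(1)] by blast
qed

lemma zieve_necessary_nonvanishing:
  assumes "r > 0" "inj (\<lambda>x::'a. x ^ r * H (x ^ (q - 1)))" "y ^ (q + 1) = 1"
  shows "H y \<noteq> 0"
proof
  assume "H y = 0"
  obtain x where "x \<noteq> 0" "x ^ (q - 1) = y" using unit_circle_power_q_minus_1 assms(3) .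
  then have "x ^ r * H (x ^ (q - 1)) = 0 ^ r * H (0 ^ (q - 1))" using \<open>H y = 0\<close> assms(1) by simp
  then have "x = 0" by (rule injD[OF assms(2)])
  then show False using \<open>x \<noteq> 0\<close> by simp
qed

lemma zieve_necessary_inj_on:
  assumes "r > 0" and inj: "inj (\<lambda>x::'a. x ^ r * H (x ^ (q - 1)))" and cop: "coprime r (q - 1)"
  shows "inj_on (\<lambda>y. y ^ r * H y ^ (q - 1)) {y. y ^ (q + 1) = 1}"
proof (rule inj_onI)
  define f where "f = (\<lambda>x::'a. x ^ r * H (x ^ (q - 1)))"
  fix y y' :: 'a
  assume y: "y \<in> {y. y ^ (q + 1) = 1}" "y' \<in> {y. y ^ (q + 1) = 1}"
    and eq: "y ^ r * H y ^ (q - 1) = y' ^ r * H y' ^ (q - 1)"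
  obtain x where x: "x \<noteq> 0" "x ^ (q - 1) = y" using unit_circle_power_q_minus_1 y(1) by blast
  obtain x' where x': "x' \<noteq> 0" "x' ^ (q - 1) = y'" using unit_circle_power_q_minus_1 y(2) by blast
  have "H y \<noteq> 0" using zieve_necessary_nonvanishing[OF assms(1) inj] y(1) by simp
  then have fx: "f x \<noteq> 0" using x unfolding f_def by simp
  have "f x' ^ (q - 1) = f x ^ (q - 1)" using power_twisted_monomial eq x x' unfolding f_def by metis
  then have "(f x' / f x) ^ (q - 1) = 1" using fx by (simp add: power_divide)
  \<comment> \<open>so f x' = u^r f x = f (u x) for a (q-1)-th root of unity u, whence x' = u x and y' = y\<close>
  then obtain u where u: "u ^ (q - 1) = 1" "u ^ r = f x' / f x"
    using power_roots_of_unity_surj[OF dvd_card_minus_1(1) cop] by blast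
  have "f (u * x) = f x'" using twisted_monomial_scale[OF u(1)] u(2) fx unfolding f_def by simp
  then have "u * x = x'" using injD[OF inj] unfolding f_def by blast
  then show "y = y'" using x x' u(1) by (metis power_mult_distrib mult_1)
qed

lemma zieve_sufficient:
  assumes "r > 0" and cop: "coprime r (q - 1)"
    and nonvanishing: "\<forall>y. y ^ (q + 1) = 1 \<longrightarrow> H y \<noteq> 0"
    and inj_on: "inj_on (\<lambda>y. y ^ r * H y ^ (q - 1)) {y. y ^ (q + 1) = 1}"
  shows "inj (\<lambda>x::'a. x ^ r * H (x ^ (q - 1)))"
proof (rule injI)
  define f where "f = (\<lambda>x::'a. x ^ r * H (x ^ (q - 1)))"
  have f_nonzero: "f x \<noteq> 0" if "x \<noteq> 0" for x
    using that nonvanishing power_q_minus_1_unit_circle[OF that] unfolding f_def by auto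
  have f_zero: "f 0 = 0" using \<open>r > 0\<close> unfolding f_def by simp
  fix a b :: 'a assume ab: "f a = f b"
  show "a = b"
  proof (cases "a = 0 \<or> b = 0")
    case True
    then show ?thesis using ab f_nonzero f_zero by metis
  next
    case False
    then have a: "a \<noteq> 0" and b: "b \<noteq> 0" by auto
    have "(a ^ (q - 1)) ^ r * H (a ^ (q - 1)) ^ (q - 1) = (b ^ (q - 1)) ^ r * H (b ^ (q - 1)) ^ (q - 1)"
      using power_twisted_monomial[of a r H "q - 1"] power_twisted_monomial[of b r H "q - 1"] ab
      unfolding f_def by metis
    then have "a ^ (q - 1) = b ^ (q - 1)"
      using inj_onD[OF inj_on] power_q_minus_1_unit_circle[OF a] power_q_minus_1_unit_circle[OF b]
      by blast
    then have z: "(b / a) ^ (q - 1) = 1" using a b by (simp add: power_divide)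
    have "f b = f ((b / a) * a)" using a by simp
    also have "\<dots> = (b / a) ^ r * f a" unfolding f_def by (rule twisted_monomial_scale[OF z])
    finally have "(b / a) ^ r = 1" using ab f_nonzero[OF a] by simp
    then have "(b / a) ^ gcd r (q - 1) = 1" using z by (rule power_gcd_eq_1)
    then show ?thesis using cop a by (simp add: coprime_iff_gcd_eq_1)
  qed
qed

theorem zieve_criterion:
  assumes "r > 0"
  shows "bij (\<lambda>x::'a. x ^ r * H (x ^ (q - 1))) \<longleftrightarrow>
     coprime r (q - 1) \<and> (\<forall>y. y ^ (q + 1) = 1 \<longrightarrow> H y \<noteq> 0) \<and>
     inj_on (\<lambda>y. y ^ r * H y ^ (q - 1)) {y. y ^ (q + 1) = 1}"
proof
  assume "bij (\<lambda>x::'a. x ^ r * H (x ^ (q - 1)))"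
  then have inj: "inj (\<lambda>x::'a. x ^ r * H (x ^ (q - 1)))" by (rule bij_is_inj)
  then show "coprime r (q - 1) \<and> (\<forall>y. y ^ (q + 1) = 1 \<longrightarrow> H y \<noteq> 0) \<and>
     inj_on (\<lambda>y. y ^ r * H y ^ (q - 1)) {y. y ^ (q + 1) = 1}"
    using zieve_necessary_coprime zieve_necessary_nonvanishing[OF assms]
      zieve_necessary_inj_on[OF assms] by blast
next
  assume "coprime r (q - 1) \<and> (\<forall>y. y ^ (q + 1) = 1 \<longrightarrow> H y \<noteq> 0) \<and>
     inj_on (\<lambda>y. y ^ r * H y ^ (q - 1)) {y. y ^ (q + 1) = 1}"
  then have "inj (\<lambda>x::'a. x ^ r * H (x ^ (q - 1)))" using zieve_sufficient[OF assms] by blast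
  then show "bij (\<lambda>x::'a. x ^ r * H (x ^ (q - 1)))" by (simp add: bij_def finite_UNIV_inj_surj)
qed

end

section \<open>The cosets of the m-th roots of unity\<close>

locale unit_circle_cosets = finite_field_square q field_type
  for q :: nat and field_type :: "'a::{finite,field_gcd} itself" +
  fixes d :: nat and eps :: 'a and m :: nat
  assumes d_dvd: "d dvd q + 1" and eps_order: "has_mult_order eps d" and m_def: "m = (q + 1) div d"
begin

abbreviation A :: "nat \<Rightarrow> 'a set" where "A k \<equiv> Aset q d eps k"

lemma d_pos: "d > 0"
  using eps_order unfolding has_mult_order_def by simp

lemma m_times_d: "m * d = q + 1"
  using d_dvd m_def by simp

lemma m_pos: "m > 0"
  using m_times_d by (cases m) auto

lemma m_dvd_q_plus_1: "m dvd q + 1"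
  using m_times_d by (metis dvd_triv_left)

lemma m_dvd_card_minus_1: "m dvd CARD('a) - 1"
  using m_dvd_q_plus_1 dvd_card_minus_1(2) by (rule dvd_trans)

lemma eps_power_d: "eps ^ d = 1"
  using eps_order unfolding has_mult_order_def by simp

lemma eps_nonzero: "eps \<noteq> 0"
  using eps_power_d d_pos by (cases d) auto

lemma eps_power_mod: "eps ^ k = eps ^ (k mod d)"
proof -
  have "eps ^ k = (eps ^ d) ^ (k div d) * eps ^ (k mod d)"
    by (simp flip: power_mult power_add)
  then show ?thesis using eps_power_d by simp
qed

lemma eps_power_inj:
  assumes "i < d" "j < d" "eps ^ i = eps ^ j" shows "i = j"
proof -
  have "eps ^ (j - i) \<noteq> 1" if "i < j" "j < d" for i j
    using that eps_order unfolding has_mult_order_def by simp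
  moreover have "eps ^ (j - i) = 1" if "i < j" "eps ^ i = eps ^ j" for i j
  proof -
    have "eps ^ j = eps ^ i * eps ^ (j - i)" using that(1) by (simp flip: power_add)
    then show ?thesis using that(2) eps_nonzero by simp
  qed
  ultimately show ?thesis using assms by (metis linorder_neqE_nat)
qed

lemma roots_of_unity_d: assumes "y ^ d = 1" shows "\<exists>j<d. y = eps ^ j"
proof -
  have "(eps ^ j) ^ d = 1" for j
    using eps_power_d by (metis mult.commute power_mult power_one)
  then have sub: "(\<lambda>j. eps ^ j) ` {..<d} \<subseteq> {y. y ^ d = 1}" by auto
  have "card ((\<lambda>j. eps ^ j) ` {..<d}) = d"
    by (subst card_image) (auto intro!: inj_onI eps_power_inj)
  moreover have "card {y::'a. y ^ d = 1} \<le> d" using card_power_eq_le[OF d_pos, of "1::'a"] .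
  moreover have "card ((\<lambda>j. eps ^ j) ` {..<d}) \<le> card {y::'a. y ^ d = 1}"
    using sub by (intro card_mono) auto
  ultimately have "(\<lambda>j. eps ^ j) ` {..<d} = {y. y ^ d = 1}"
    using sub by (intro card_subset_eq) auto
  then show ?thesis using assms by auto
qed

lemma mem_A_iff: "x \<in> A k \<longleftrightarrow> x \<noteq> 0 \<and> x ^ (q + 1) = 1 \<and> x ^ m = eps ^ k"
  unfolding Aset_def mu_def m_def by auto

lemma A_cover: assumes "x ^ (q + 1) = 1" shows "\<exists>k<d. x \<in> A k"
proof -
  have "(x ^ m) ^ d = 1" using assms m_times_d by (simp flip: power_mult)
  then obtain j where "j < d" "x ^ m = eps ^ j" using roots_of_unity_d by blast
  moreover have "x \<noteq> 0" using assms by (cases "x = 0") simp_all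
  ultimately show ?thesis unfolding mem_A_iff using assms by blast
qed

lemma A_disjoint: "x \<in> A i \<Longrightarrow> x \<in> A j \<Longrightarrow> i < d \<Longrightarrow> j < d \<Longrightarrow> i = j"
  using eps_power_inj unfolding mem_A_iff by auto

lemma unit_circle_eq_Union_A: "{y::'a. y ^ (q + 1) = 1} = (\<Union>k<d. A k)"
proof
  show "{y::'a. y ^ (q + 1) = 1} \<subseteq> (\<Union>k<d. A k)" using A_cover by blast
qed (auto simp: mem_A_iff)

lemma card_A_le: "card (A k) \<le> m"
proof -
  have "card (A k) \<le> card {x::'a. x ^ m = eps ^ k}" by (intro card_mono) (auto simp: mem_A_iff)
  also have "\<dots> \<le> m" using card_power_eq_le[OF m_pos] .
  finally show ?thesis .
qed

text \<open>The d cosets A k cover the q + 1 = d m roots of unity and have at most m elements each.\<close>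
lemma card_A: assumes "k0 < d" shows "card (A k0) = m"
proof -
  have "m * d = (\<Sum>k<d. card (A k))"
    using card_unit_circle m_times_d unfolding unit_circle_eq_Union_A
    by (subst (asm) card_UN_disjoint) (auto dest: A_disjoint)
  also have "\<dots> = card (A k0) + (\<Sum>k\<in>{..<d}-{k0}. card (A k))"
    using assms by (simp add: sum.remove)
  also have "\<dots> \<le> card (A k0) + (d - 1) * m"
    using sum_mono[of "{..<d}-{k0}" "\<lambda>k. card (A k)" "\<lambda>_. m"] card_A_le assms by simp
  finally have "m \<le> card (A k0)"
    using d_pos by (cases d) (auto simp: algebra_simps)
  then show ?thesis using card_A_le[of k0] by simp
qed

lemma A_nonempty:
  assumes "k < d" obtains x where "x \<in> A k"
proof -
  have "A k \<noteq> {}" using card_A[OF assms] m_pos by auto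
  then show ?thesis using that by blast
qed

lemma A_eq_coset:
  assumes "x0 \<in> A k" shows "A k = (\<lambda>z. x0 * z) ` {z. z ^ m = 1}"
proof -
  have x0: "x0 \<noteq> 0" "x0 ^ (q + 1) = 1" "x0 ^ m = eps ^ k" using assms mem_A_iff by auto
  have "x0 * z \<in> A k" if "z ^ m = 1" for z
  proof -
    have "z ^ (q + 1) = 1" using that m_times_d by (metis power_mult power_one)
    then have "(x0 * z) ^ (q + 1) = 1" using x0(2) by (simp only: power_mult_distrib mult_1)
    moreover have "(x0 * z) ^ m = eps ^ k" using x0(3) that by (simp only: power_mult_distrib mult_1_right)
    ultimately show ?thesis using that x0(1) m_pos by (auto simp: mem_A_iff)
  qed
  moreover have "(x / x0) ^ m = 1" "x = x0 * (x / x0)" if "x \<in> A k" for x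
    using that x0 eps_nonzero by (auto simp: mem_A_iff power_divide)
  ultimately show ?thesis by blast
qed

lemma inj_on_power_A_iff:
  assumes "k < d" shows "inj_on (\<lambda>x. x ^ E) (A k) \<longleftrightarrow> coprime E m"
proof -
  obtain x0 where x0: "x0 \<in> A k" using A_nonempty assms .
  then have "x0 \<noteq> 0" using mem_A_iff by blast
  have "inj_on (\<lambda>x. x ^ E) (A k) \<longleftrightarrow> inj_on ((\<lambda>x. x ^ E) \<circ> (\<lambda>z. x0 * z)) {z. z ^ m = 1}"
    unfolding A_eq_coset[OF x0] using \<open>x0 \<noteq> 0\<close> by (intro comp_inj_on_iff) (auto intro: inj_onI)
  also have "\<dots> \<longleftrightarrow> inj_on (\<lambda>z. z ^ E) {z::'a. z ^ m = 1}"
    using \<open>x0 \<noteq> 0\<close> by (simp add: comp_def power_mult_distrib inj_on_def)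
  also have "\<dots> \<longleftrightarrow> coprime E m" by (rule inj_on_power_roots_of_unity_iff[OF m_dvd_card_minus_1])
  finally show ?thesis .
qed

lemma monomial_image_A:
  assumes "lam \<in> A p" "x \<in> A k"
  shows "lam * x ^ E \<in> A ((p + E * k) mod d)"
proof -
  have l: "lam \<noteq> 0" "lam ^ (q + 1) = 1" "lam ^ m = eps ^ p" using assms(1) mem_A_iff by auto
  have x: "x \<noteq> 0" "x ^ (q + 1) = 1" "x ^ m = eps ^ k" using assms(2) mem_A_iff by auto
  have eps_E: "(eps ^ k) ^ E = eps ^ (E * k)" by (simp only: power_mult[symmetric] mult.commute)
  have "(lam * x ^ E) ^ m = lam ^ m * (x ^ m) ^ E"
    by (simp only: power_mult_distrib power_mult[symmetric] mult.commute)
  also have "\<dots> = eps ^ (p + E * k)" using l x eps_E by (simp add: power_add)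
  finally have "(lam * x ^ E) ^ m = eps ^ ((p + E * k) mod d)" using eps_power_mod by simp
  moreover have "(lam * x ^ E) ^ (q + 1) = lam ^ (q + 1) * (x ^ (q + 1)) ^ E"
    by (simp only: power_mult_distrib power_mult[symmetric] mult.commute)
  ultimately show ?thesis using l x by (simp add: mem_A_iff del: power_Suc)
qed

context
  fixes G :: "'a \<Rightarrow> 'a" and lam :: "nat \<Rightarrow> 'a" and pp E :: "nat \<Rightarrow> nat"
  assumes pieces: "\<And>k. k < d \<Longrightarrow> pp k < d \<and> lam k \<in> A (pp k) \<and> (\<forall>x\<in>A k. G x = lam k * x ^ E k)"
begin

lemma piecewise_monomial_maps_A:
  "k < d \<Longrightarrow> x \<in> A k \<Longrightarrow> G x \<in> A ((pp k + E k * k) mod d)"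
  using pieces monomial_image_A by simp

lemma inj_on_A_iff_coprime:
  assumes "k < d" shows "inj_on G (A k) \<longleftrightarrow> coprime (E k) m"
proof -
  have "lam k \<noteq> 0" using pieces[OF assms] mem_A_iff by blast
  then have "inj_on G (A k) \<longleftrightarrow> inj_on (\<lambda>x. x ^ E k) (A k)"
    using pieces[OF assms] by (auto simp: inj_on_def)
  also have "\<dots> \<longleftrightarrow> coprime (E k) m" by (rule inj_on_power_A_iff[OF assms])
  finally show ?thesis .
qed

lemma image_A_piecewise_monomial:
  assumes "k < d" "coprime (E k) m" shows "G ` A k = A ((pp k + E k * k) mod d)"
proof (rule card_subset_eq)
  show "G ` A k \<subseteq> A ((pp k + E k * k) mod d)" using piecewise_monomial_maps_A assms(1) by blast
  have "inj_on G (A k)" using inj_on_A_iff_coprime assms by blast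
  then show "card (G ` A k) = card (A ((pp k + E k * k) mod d))"
    using card_image[of G "A k"] card_A[OF assms(1)] card_A[of "(pp k + E k * k) mod d"] d_pos by simp
qed simp

lemma inj_on_unit_circle_imp_inj_on_index:
  assumes inj: "inj_on G {y. y ^ (q + 1) = 1}" and cop: "\<forall>k<d. coprime (E k) m"
  shows "inj_on (\<lambda>k. (pp k + E k * k) mod d) {..<d}"
proof (rule inj_onI)
  fix k1 k2 assume k: "k1 \<in> {..<d}" "k2 \<in> {..<d}"
    and eq: "(pp k1 + E k1 * k1) mod d = (pp k2 + E k2 * k2) mod d"
  obtain x1 where x1: "x1 \<in> A k1" using A_nonempty k(1) by blast
  have "G x1 \<in> G ` A k2"
    using x1 eq image_A_piecewise_monomial k cop by (metis image_eqI lessThan_iff)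
  then obtain x2 where x2: "x2 \<in> A k2" "G x1 = G x2" by blast
  have "x1 = x2" using inj_onD[OF inj x2(2)] x1 x2(1) by (simp add: mem_A_iff)
  then show "k1 = k2" using A_disjoint x1 x2(1) k by simp
qed

lemma inj_on_unit_circle_piecewise_monomial:
  assumes cop: "\<forall>k<d. coprime (E k) m" and inj: "inj_on (\<lambda>k. (pp k + E k * k) mod d) {..<d}"
  shows "inj_on G {y. y ^ (q + 1) = 1}"
proof (rule inj_onI)
  fix y1 y2 assume y: "y1 \<in> {y. y ^ (q + 1) = 1}" "y2 \<in> {y. y ^ (q + 1) = 1}" "G y1 = G y2"
  obtain k1 k2 where k: "k1 < d" "y1 \<in> A k1" "k2 < d" "y2 \<in> A k2" using A_cover y by blast
  have "(pp k1 + E k1 * k1) mod d = (pp k2 + E k2 * k2) mod d"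
    using piecewise_monomial_maps_A[of k1 y1] piecewise_monomial_maps_A[of k2 y2] k y(3) d_pos
    by (metis A_disjoint mod_less_divisor)
  then have "k1 = k2" using inj k by (meson inj_onD lessThan_iff)
  then show "y1 = y2" using inj_on_A_iff_coprime cop k y(3) by (meson inj_onD)
qed

theorem inj_on_unit_circle_piecewise_monomial_iff:
  "inj_on G {y. y ^ (q + 1) = 1} \<longleftrightarrow>
     (\<forall>k<d. coprime (E k) m) \<and> inj_on (\<lambda>k. (pp k + E k * k) mod d) {..<d}"
proof -
  have "inj_on G {y. y ^ (q + 1) = 1} \<Longrightarrow> k < d \<Longrightarrow> coprime (E k) m" for k
    using inj_on_A_iff_coprime inj_on_subset unit_circle_eq_Union_A by blast
  then show ?thesis
    using inj_on_unit_circle_imp_inj_on_index inj_on_unit_circle_piecewise_monomial by blast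
qed

end

section \<open>Reciprocal decompositions\<close>

lemma mem_Lset_iff:
  "L \<in> Lset q d eps k t \<tau> lam \<longleftrightarrow>
   (if \<tau> = 0 then L \<noteq> 0 \<and> degree L = t \<and> ptilde q L = smult lam L \<and> gcd L (monom 1 m - [:eps ^ k:]) = 1
    else (\<exists>P Q. L = P + monom 1 (m - \<tau>) * Q \<and>
             P \<noteq> 0 \<and> degree P = t - \<tau> \<and> ptilde q P = smult lam P \<and>
             Q \<noteq> 0 \<and> degree Q = \<tau> + t - m \<and> ptilde q Q = smult (lam * eps ^ k) Q \<and>
             gcd L (monom 1 m - [:eps ^ k:]) = 1))"
  unfolding Lset_def Let_def m_def by simp

lemma X_m_minus_eps_k_eq_prod:
  assumes "k < d" shows "monom 1 m - [:eps ^ k:] = (\<Prod>a\<in>A k. [:-a, 1:])"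
proof (rule poly_eqI_degree_lead_coeff[of _ m _ "A k"])
  have deg: "degree (\<Prod>a\<in>A k. [:-a, 1:]) = m"
    using card_A[OF assms] by (subst degree_prod_sum_eq) auto
  then show "degree (\<Prod>a\<in>A k. [:-a, 1:]) \<le> m" by simp
  have "lead_coeff (\<Prod>a\<in>A k. [:-a, 1:]) = 1" by (simp add: lead_coeff_prod)
  then show "coeff (monom 1 m - [:eps ^ k:]) m = coeff (\<Prod>a\<in>A k. [:-a, 1:]) m"
    using m_pos deg by (simp add: coeff_pCons split: nat.split)
  show "m \<le> card (A k)" using card_A[OF assms] by simp
  show "degree (monom 1 m - [:eps ^ k:]) \<le> m" by (intro degree_diff_le) (auto simp: degree_monom_eq)
  show "poly (monom 1 m - [:eps ^ k:]) z = poly (\<Prod>a\<in>A k. [:-a, 1:]) z" if "z \<in> A k" for z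
    using that by (auto simp: mem_A_iff poly_monom poly_prod intro!: prod_zero[symmetric])
qed

lemma gcd_X_m_minus_eps_k_eq_1_iff:
  assumes "k < d"
  shows "gcd L (monom 1 m - [:eps ^ k:]) = 1 \<longleftrightarrow> (\<forall>x\<in>A k. poly L x \<noteq> 0)"
proof
  assume "gcd L (monom 1 m - [:eps ^ k:]) = 1"
  then have "coprime L (monom 1 m - [:eps ^ k:])" by (simp add: coprime_iff_gcd_eq_1)
  then show "\<forall>x\<in>A k. poly L x \<noteq> 0"
    using coprime_poly_0 by (fastforce simp: mem_A_iff poly_monom)
next
  assume nonvanishing: "\<forall>x\<in>A k. poly L x \<noteq> 0"
  have "coprime L (\<Prod>a\<in>A k. [:-a, 1:])"
  proof (rule prod_coprime_right)
    fix a assume "a \<in> A k"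
    then have "\<not> [:-a, 1:] dvd L" using nonvanishing by (simp add: poly_eq_0_iff_dvd[symmetric])
    moreover have "prime_elem [:-a, 1::'a:]" by (rule prime_elem_linear_field_poly) simp
    ultimately show "coprime L [:-a, 1:]" using prime_elem_imp_coprime coprime_commute by blast
  qed
  then show "gcd L (monom 1 m - [:eps ^ k:]) = 1"
    using X_m_minus_eps_k_eq_prod[OF assms] by (simp add: coprime_iff_gcd_eq_1)
qed

lemma ptilde_eq_on_A:
  assumes "x \<in> A k" "ptilde q f = smult c f"
  shows "x ^ degree f * poly f x ^ q = c * poly f x"
  using poly_ptilde_unit_circle[of x f] assms by (simp add: mem_A_iff)

text \<open>On A k the factor X^(m - \<tau>) turns the twisted self-reciprocity of Q into that of L.\<close>
lemma conj_sum_on_A: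
  assumes x: "x \<in> A k" and P: "x ^ (t - \<tau>) * poly P x ^ q = lam * poly P x"
    and Q: "x ^ (\<tau> + t - m) * poly Q x ^ q = lam * eps ^ k * poly Q x"
    and \<tau>: "m - t \<le> \<tau>" "\<tau> \<le> t" and "t < m"
  shows "x ^ (t - \<tau>) * poly (P + monom 1 (m - \<tau>) * Q) x ^ q = lam * poly (P + monom 1 (m - \<tau>) * Q) x"
proof -
  have x_unit: "x ^ (q + 1) = 1" and x_m: "x ^ m = eps ^ k" using x mem_A_iff by auto
  obtain a b where a: "t = \<tau> + a" and b: "m = \<tau> + b" using \<tau> \<open>t < m\<close> le_iff_add
    by (metis less_imp_le_nat order_trans)
  have exps: "m + (t - \<tau>) + (m - \<tau>) * q = (m - \<tau>) * (q + 1) + t"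
    unfolding a b by (simp add: algebra_simps)
  have t_split: "t = (m - \<tau>) + (\<tau> + t - m)" using \<tau> \<open>t < m\<close> by simp
  have "eps ^ k * (x ^ (t - \<tau>) * (x ^ (m - \<tau>)) ^ q * poly Q x ^ q)
      = x ^ (m + (t - \<tau>) + (m - \<tau>) * q) * poly Q x ^ q"
    using x_m by (simp add: power_add power_mult[symmetric] algebra_simps)
  also have "\<dots> = (x ^ (q + 1)) ^ (m - \<tau>) * x ^ t * poly Q x ^ q"
    unfolding exps by (simp only: power_add power_mult mult.commute[of "m - \<tau>"])
  also have "\<dots> = 1 * x ^ t * poly Q x ^ q" using x_unit by simp
  also have "\<dots> = x ^ (m - \<tau>) * (x ^ (\<tau> + t - m) * poly Q x ^ q)"
    by (subst (1) t_split) (simp only: power_add mult_1 mult.assoc)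
  also have "\<dots> = eps ^ k * (lam * x ^ (m - \<tau>) * poly Q x)" using Q by (simp add: algebra_simps)
  finally have "x ^ (t - \<tau>) * (x ^ (m - \<tau>)) ^ q * poly Q x ^ q = lam * x ^ (m - \<tau>) * poly Q x"
    using eps_nonzero by simp
  then show ?thesis using P by (simp add: poly_monom frobenius_add power_mult_distrib algebra_simps)
qed

lemma Lset_on_A:
  assumes L: "L \<in> Lset q d eps k t \<tau> lam" and k: "k < d"
    and \<tau>: "\<tau> = 0 \<or> (m - t \<le> \<tau> \<and> \<tau> \<le> t)" and "t < m" and x: "x \<in> A k"
  shows "poly L x \<noteq> 0 \<and> x ^ (t - \<tau>) * poly L x ^ q = lam * poly L x"
proof (cases "\<tau> = 0")
  case True
  then show ?thesis
    using L ptilde_eq_on_A[OF x] gcd_X_m_minus_eps_k_eq_1_iff[OF k] x by (auto simp: mem_Lset_iff)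
next
  case False
  then obtain P Q where PQ: "L = P + monom 1 (m - \<tau>) * Q"
       "degree P = t - \<tau>" "ptilde q P = smult lam P"
       "degree Q = \<tau> + t - m" "ptilde q Q = smult (lam * eps ^ k) Q"
       "gcd L (monom 1 m - [:eps ^ k:]) = 1"
    using L by (auto simp: mem_Lset_iff)
  show ?thesis
    using conj_sum_on_A[OF x ptilde_eq_on_A[OF x PQ(3), unfolded PQ(2)]
        ptilde_eq_on_A[OF x PQ(5), unfolded PQ(4)]] PQ \<tau> False \<open>t < m\<close>
      gcd_X_m_minus_eps_k_eq_1_iff[OF k] x by auto
qed

lemma conj_eq_imp_unit_circle:
  assumes x: "x \<in> A k" and y: "y \<noteq> 0" and eq: "x ^ j * y ^ q = lam * y"
  shows "lam \<noteq> 0 \<and> lam ^ (q + 1) = 1"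
proof -
  have x_unit: "x ^ (q + 1) = 1" using x mem_A_iff by auto
  have "y ^ (q * q) = y" using power_card_finite_field[of y] card_field by (simp add: power2_eq_square)
  have "(lam * y) * (lam * y) ^ q = (x ^ j * y ^ q) * (x ^ j * y ^ q) ^ q" using eq by simp
  also have "\<dots> = (x ^ (q + 1)) ^ j * y ^ q * y ^ (q * q)"
    by (simp add: power_mult_distrib algebra_simps flip: power_mult)
  also have "\<dots> = y * y ^ q" using x_unit \<open>y ^ (q * q) = y\<close> by simp
  finally have "lam ^ (q + 1) * (y * y ^ q) = y * y ^ q" by (simp add: power_mult_distrib algebra_simps)
  then have "lam ^ (q + 1) = 1" using y by simp
  then show ?thesis by (auto simp del: power_Suc)
qed

lemma monomial_form_on_A:
  assumes x: "x \<in> A k" and N: "poly N x = x ^ s * poly L x" and L: "poly L x \<noteq> 0"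
    and conj: "x ^ (t - \<tau>) * poly L x ^ q = lam * poly L x" and "\<tau> \<le> t"
  shows "x ^ r * poly N x ^ (q - 1) = lam * power_int x (int r - 2 * int s - int t + int \<tau>)"
proof -
  have x0: "x \<noteq> 0" and x_unit: "x ^ (q + 1) = 1" using x mem_A_iff by auto
  define y where "y = poly L x"
  have "x ^ (q - 1) * x ^ 2 = x ^ (q + 1)" using q_ge_2 by (simp flip: power_add)
  then have x_pow: "x ^ (q - 1) = 1 / x ^ 2" using x_unit x0 by (simp add: field_simps)
  have y0: "y \<noteq> 0" using L y_def by simp
  have "y ^ (q - 1) * y = y ^ q" using q_ge_2 by (intro power_minus_mult) simp
  then have "y ^ (q - 1) = y ^ q / y" using y0 by (simp add: field_simps)
  also have "\<dots> = lam / x ^ (t - \<tau>)" using conj x0 y0 unfolding y_def[symmetric] by (simp add: field_simps)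
  also have "x ^ (t - \<tau>) = x ^ t / x ^ \<tau>" using x0 \<open>\<tau> \<le> t\<close> by (simp add: power_diff)
  finally have y_pow: "y ^ (q - 1) = lam * x ^ \<tau> / x ^ t" using x0 by simp
  have "power_int x (int r - 2 * int s - int t + int \<tau>) = power_int x (int (r + \<tau>) - int (2 * s + t))"
    by (rule arg_cong[where f = "power_int x"]) simp
  also have "\<dots> = x ^ (r + \<tau>) / x ^ (2 * s + t)" using x0 by (metis power_int_diff power_int_of_nat)
  also have "\<dots> = x ^ r * (1 / x ^ (2 * s)) * (x ^ \<tau> / x ^ t)" using x0 by (simp add: power_add)
  also have "1 / x ^ (2 * s) = (1 / x ^ 2) ^ s" by (simp add: power_mult power_one_over)
  finally have e_pow: "power_int x (int r - 2 * int s - int t + int \<tau>) = x ^ r * (1 / x ^ 2) ^ s * (x ^ \<tau> / x ^ t)" .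
  have "(x ^ s) ^ (q - 1) = (x ^ (q - 1)) ^ s" by (simp only: power_mult[symmetric] mult.commute)
  then have "x ^ r * poly N x ^ (q - 1) = x ^ r * (x ^ (q - 1)) ^ s * y ^ (q - 1)"
    using N by (simp add: y_def power_mult_distrib)
  also have "\<dots> = lam * (x ^ r * (1 / x ^ 2) ^ s * (x ^ \<tau> / x ^ t))" using x_pow y_pow by simp
  finally show ?thesis using e_pow by simp
qed

lemma power_int_on_A:
  assumes "x \<in> A k"
  shows "power_int x e = power_int (eps ^ k) (e div int m) * x ^ nat (e mod int m)"
  using power_int_div_mod[of x m e] assms m_pos by (simp add: mem_A_iff)

lemma ptilde_on_A_of_monomial:
  assumes N: "N = monom 1 s * L" and nonvanishing: "\<forall>x\<in>A k. poly L x \<noteq> 0"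
    and form: "\<forall>x\<in>A k. x ^ r * poly N x ^ (q - 1) = c * power_int x n"
  shows "\<exists>c' j. j < m \<and> (\<forall>x\<in>A k. poly (ptilde q L) x = c' * x ^ j * poly L x)"
proof -
  define e where "e = n - int (r + s * (q - 1)) + int (degree L)"
  have "poly (ptilde q L) x = c * power_int x e * poly L x" if x: "x \<in> A k" for x
  proof -
    have x0: "x \<noteq> 0" using x mem_A_iff by auto
    define y where "y = poly L x"
    have "x ^ r * (x ^ (s * (q - 1)) * y ^ (q - 1)) = c * power_int x n"
      using form x N by (simp add: y_def poly_monom power_mult_distrib power_mult)
    then have "y ^ (q - 1) = c * (power_int x n / x ^ (r + s * (q - 1)))"
      using x0 by (simp add: power_add field_simps)
    also have "power_int x n / x ^ (r + s * (q - 1)) = power_int x (n - int (r + s * (q - 1)))"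
      using x0 by (metis power_int_diff power_int_of_nat)
    finally have "y ^ (q - 1) = c * power_int x (n - int (r + s * (q - 1)))" .
    moreover have "y ^ (q - 1) * y = y ^ q" using q_ge_2 by (intro power_minus_mult) simp
    then have "poly (ptilde q L) x = x ^ degree L * y ^ (q - 1) * y"
      using poly_ptilde_unit_circle[of x L] x by (simp add: y_def mem_A_iff mult.assoc)
    ultimately show ?thesis
      using x0 by (simp add: e_def y_def power_int_add)
  qed
  moreover have "nat (e mod int m) < m" using m_pos by (simp add: nat_less_iff)
  ultimately show ?thesis using power_int_on_A
    by (intro exI[of _ "c * power_int (eps ^ k) (e div int m)"] exI[of _ "nat (e mod int m)"]) auto
qed

lemma ptilde_split_of_ptilde_on_A:
  assumes k: "k < d" and j: "j < m" and deg: "degree L < m"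
    and ptilde: "\<forall>x\<in>A k. poly (ptilde q L) x = c * x ^ j * poly L x"
  shows "ptilde q L = smult c (monom 1 j * poly_cutoff (m - j) L + smult (eps ^ k) (poly_shift (m - j) L))"
proof (rule poly_eqI_degree[of "A k"])
  fix x assume x: "x \<in> A k"
  have "x ^ j * x ^ (m - j) = eps ^ k" using x j by (simp add: mem_A_iff flip: power_add)
  then have "x ^ j * poly L x = x ^ j * poly (poly_cutoff (m - j) L) x + eps ^ k * poly (poly_shift (m - j) L) x"
    by (subst poly_cutoff_plus_shift[of L "m - j"]) (simp add: poly_monom algebra_simps)
  then show "poly (ptilde q L) x =
      poly (smult c (monom 1 j * poly_cutoff (m - j) L + smult (eps ^ k) (poly_shift (m - j) L))) x"
    using ptilde x by (simp add: poly_monom algebra_simps)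
next
  show "degree (ptilde q L) < card (A k)" using degree_ptilde_le[of q L] deg card_A[OF k] by simp
  have "degree (monom 1 j * poly_cutoff (m - j) L + smult (eps ^ k) (poly_shift (m - j) L)) \<le> m - 1"
    using j deg by (intro degree_le allI impI)
      (simp add: coeff_monom_mult coeff_poly_cutoff coeff_poly_shift coeff_eq_0)
  then show "degree (smult c (monom 1 j * poly_cutoff (m - j) L + smult (eps ^ k) (poly_shift (m - j) L)))
      < card (A k)"
    using card_A[OF k] m_pos by (meson degree_smult_le diff_less le_less_trans less_one order.trans)
qed

lemma Lset_of_ptilde_on_A:
  assumes k: "k < d" and L0: "coeff L 0 \<noteq> 0" and deg: "degree L < m"
    and nonvanishing: "\<forall>x\<in>A k. poly L x \<noteq> 0" and j: "j < m"
    and ptilde: "\<forall>x\<in>A k. poly (ptilde q L) x = c * x ^ j * poly L x"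
  shows "(j = 0 \<or> (m - degree L \<le> j \<and> j \<le> degree L)) \<and> L \<in> Lset q d eps k (degree L) j c"
proof -
  have gcd: "gcd L (monom 1 m - [:eps ^ k:]) = 1"
    using nonvanishing gcd_X_m_minus_eps_k_eq_1_iff[OF k] by blast
  show ?thesis
  proof (cases "j = 0")
    case True
    have "ptilde q L = smult c L"
      using ptilde True degree_ptilde_le[of q L] deg card_A[OF k]
      by (intro poly_eqI_degree[of "A k"]) auto
    then show ?thesis using True L0 gcd by (auto simp: mem_Lset_iff)
  next
    case False
    then have j_pos: "0 < j" by simp
    note ptilde_split = ptilde_split_of_ptilde_on_A[OF k j deg ptilde]
    note split = ptilde_split_degrees[OF j_pos j deg L0 ptilde_split]
      ptilde_cutoff_reciprocal[OF j_pos j deg L0 ptilde_split]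
      ptilde_shift_reciprocal[OF j_pos j deg L0 ptilde_split]
    have "L \<in> Lset q d eps k (degree L) j c"
      unfolding mem_Lset_iff if_not_P[OF False]
      by (rule exI[of _ "poly_cutoff (m - j) L"], rule exI[of _ "poly_shift (m - j) L"])
        (intro conjI poly_cutoff_plus_shift split gcd)
    then show ?thesis using split False by simp
  qed
qed

text \<open>Condition (i) of the theorem at the index k, for N = sum_i M_ik X^i and p = pi(k).\<close>
definition reciprocal_decomposition ::
    "'a poly \<Rightarrow> nat \<Rightarrow> nat \<Rightarrow> nat \<Rightarrow> nat \<Rightarrow> 'a \<Rightarrow> nat \<Rightarrow> 'a poly \<Rightarrow> bool" where
  "reciprocal_decomposition N k s t p lam \<tau> L \<longleftrightarrow>
     s + t < m \<and> p < d \<and> lam \<in> A p \<and> (\<tau> = 0 \<or> (m - t \<le> \<tau> \<and> \<tau> \<le> t)) \<and>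
     N = monom 1 s * L \<and> L \<in> Lset q d eps k t \<tau> lam"

text \<open>Conditions (ii) and (iii) without gcd(r, q-1) = 1, with Z/d represented by {0..<d}.\<close>
definition exponent_conditions ::
    "nat \<Rightarrow> (nat \<Rightarrow> nat) \<Rightarrow> (nat \<Rightarrow> nat) \<Rightarrow> (nat \<Rightarrow> nat) \<Rightarrow> (nat \<Rightarrow> nat) \<Rightarrow> bool" where
  "exponent_conditions r s t p \<tau> \<longleftrightarrow>
     (\<forall>k<d. gcd (int r - 2 * int (s k) - int (t k) + int (\<tau> k)) (int m) = 1) \<and>
     bij_betw (\<lambda>k. (int (p k) + (int r - 2 * int (s k) - int (t k) + int (\<tau> k)) * int k) mod int d)
       {..<d} {0..<int d}"

lemma reciprocal_decomposition_on_A: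
  assumes "reciprocal_decomposition N k s t p lam \<tau> L" "k < d" "x \<in> A k"
  shows "poly N x \<noteq> 0 \<and>
    x ^ r * poly N x ^ (q - 1) = lam * power_int x (int r - 2 * int s - int t + int \<tau>)"
proof -
  have "poly L x \<noteq> 0 \<and> x ^ (t - \<tau>) * poly L x ^ q = lam * poly L x"
    using assms Lset_on_A[of L k t \<tau> lam x] unfolding reciprocal_decomposition_def by auto
  moreover have "poly N x = x ^ s * poly L x" "x \<noteq> 0" "\<tau> \<le> t"
    using assms unfolding reciprocal_decomposition_def by (auto simp: poly_monom mem_A_iff)
  ultimately show ?thesis using monomial_form_on_A assms(3) by simp
qed

lemma monomial_on_A_iff_reciprocal_decomposition:
  assumes k: "k < d" and deg: "\<And>i. m \<le> i \<Longrightarrow> coeff N i = 0"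
  shows "(\<forall>x\<in>A k. poly N x \<noteq> 0) \<and> (\<exists>c n. \<forall>x\<in>A k. x ^ r * poly N x ^ (q - 1) = c * power_int x n)
    \<longleftrightarrow> (\<exists>s t p lam \<tau> L. reciprocal_decomposition N k s t p lam \<tau> L)"
proof
  assume "(\<forall>x\<in>A k. poly N x \<noteq> 0) \<and> (\<exists>c n. \<forall>x\<in>A k. x ^ r * poly N x ^ (q - 1) = c * power_int x n)"
  then obtain c n where nonvanishing: "\<forall>x\<in>A k. poly N x \<noteq> 0"
    and form: "\<forall>x\<in>A k. x ^ r * poly N x ^ (q - 1) = c * power_int x n" by blast
  obtain x0 where x0: "x0 \<in> A k" using A_nonempty k .
  then have "N \<noteq> 0" using nonvanishing by auto
  then obtain s L where N: "N = monom 1 s * L" and L0: "coeff L 0 \<noteq> 0"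
    by (rule poly_eq_monom_times_nonvanishing_at_0)
  have L_nonvanishing: "\<forall>x\<in>A k. poly L x \<noteq> 0" using nonvanishing N by (simp add: poly_monom)
  have "L \<noteq> 0" using L0 by auto
  then have "coeff N (s + degree L) \<noteq> 0" using N by (simp add: coeff_monom_mult)
  then have st: "s + degree L < m" using deg by (meson not_le)
  obtain c' j where "j < m" and ptilde: "\<forall>x\<in>A k. poly (ptilde q L) x = c' * x ^ j * poly L x"
    using ptilde_on_A_of_monomial[OF N L_nonvanishing form] by blast
  then have \<tau>: "j = 0 \<or> (m - degree L \<le> j \<and> j \<le> degree L)" and L: "L \<in> Lset q d eps k (degree L) j c'"
    using Lset_of_ptilde_on_A[OF k L0 _ L_nonvanishing] st by auto
  have "c' \<noteq> 0 \<and> c' ^ (q + 1) = 1"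
    using Lset_on_A[OF L k \<tau> _ x0] st conj_eq_imp_unit_circle[OF x0] by auto
  then obtain p where "p < d" "c' \<in> A p" using A_cover by auto
  then show "\<exists>s t p lam \<tau> L. reciprocal_decomposition N k s t p lam \<tau> L"
    using st \<tau> N L unfolding reciprocal_decomposition_def by blast
next
  assume "\<exists>s t p lam \<tau> L. reciprocal_decomposition N k s t p lam \<tau> L"
  then show "(\<forall>x\<in>A k. poly N x \<noteq> 0) \<and> (\<exists>c n. \<forall>x\<in>A k. x ^ r * poly N x ^ (q - 1) = c * power_int x n)"
    using reciprocal_decomposition_on_A[OF _ k] by blast
qed

lemma inj_on_unit_circle_iff_exponent_conditions:
  assumes data: "\<forall>k<d. reciprocal_decomposition (N k) k (s k) (t k) (p k) (lam k) (\<tau> k) (L k)"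
    and hN: "\<forall>k<d. \<forall>x\<in>A k. poly h x = poly (N k) x"
  shows "inj_on (\<lambda>y. y ^ r * poly h y ^ (q - 1)) {y. y ^ (q + 1) = 1} \<longleftrightarrow>
    exponent_conditions r s t p \<tau>"
proof -
  define e where "e k = int r - 2 * int (s k) - int (t k) + int (\<tau> k)" for k
  define E where "E k = nat (e k mod int (q + 1))" for k
  have "p k < d \<and> lam k \<in> A (p k) \<and> (\<forall>x\<in>A k. x ^ r * poly h x ^ (q - 1) = lam k * x ^ E k)"
    if "k < d" for k
  proof -
    have "x ^ r * poly h x ^ (q - 1) = lam k * x ^ E k" if x: "x \<in> A k" for x
    proof -
      have "x ^ r * poly (N k) x ^ (q - 1) = lam k * power_int x (e k)"
        using reciprocal_decomposition_on_A data \<open>k < d\<close> x unfolding e_def by blast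
      moreover have "power_int x (e k) = x ^ E k"
        unfolding E_def using x by (intro power_int_mod_eq) (auto simp: mem_A_iff)
      ultimately show ?thesis using hN \<open>k < d\<close> x by simp
    qed
    then show ?thesis using data \<open>k < d\<close> unfolding reciprocal_decomposition_def by blast
  qed
  then have "inj_on (\<lambda>y. y ^ r * poly h y ^ (q - 1)) {y. y ^ (q + 1) = 1} \<longleftrightarrow>
     (\<forall>k<d. coprime (E k) m) \<and> inj_on (\<lambda>k. (p k + E k * k) mod d) {..<d}"
    by (rule inj_on_unit_circle_piecewise_monomial_iff)
  also have "(\<forall>k<d. coprime (E k) m) \<longleftrightarrow> (\<forall>k<d. gcd (e k) (int m) = 1)"
    using coprime_nat_mod_iff[OF m_dvd_q_plus_1] by (simp add: E_def)
  also have "inj_on (\<lambda>k. (p k + E k * k) mod d) {..<d} \<longleftrightarrow>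
      bij_betw (\<lambda>k. (int (p k) + e k * int k) mod int d) {..<d} {0..<int d}"
    using bij_betw_of_nat_lessThan_iff[where f = "\<lambda>k. (p k + E k * k) mod d"] d_pos
      of_nat_mod_nat_mod[OF d_dvd] by (simp add: E_def)
  finally show ?thesis by (simp add: e_def exponent_conditions_def)
qed

lemma local_forms_iff_reciprocal_decomposition:
  assumes hN: "\<forall>k<d. \<forall>x\<in>A k. poly h x = poly (N k) x"
    and deg: "\<forall>k i. m \<le> i \<longrightarrow> coeff (N k) i = 0"
  shows "(\<forall>y. y ^ (q + 1) = 1 \<longrightarrow> poly h y \<noteq> 0) \<and>
      (\<forall>k<d. \<exists>c n. \<forall>x\<in>A k. x ^ r * poly h x ^ (q - 1) = c * power_int x n) \<longleftrightarrow>
      (\<exists>s t p lam \<tau> L. \<forall>k<d. reciprocal_decomposition (N k) k (s k) (t k) (p k) (lam k) (\<tau> k) (L k))"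
proof -
  have "(\<forall>y. y ^ (q + 1) = 1 \<longrightarrow> poly h y \<noteq> 0) \<longleftrightarrow> (\<forall>y\<in>(\<Union>k<d. A k). poly h y \<noteq> 0)"
    unfolding unit_circle_eq_Union_A[symmetric] by simp
  then have nonvanishing: "(\<forall>y. y ^ (q + 1) = 1 \<longrightarrow> poly h y \<noteq> 0) \<longleftrightarrow>
      (\<forall>k<d. \<forall>x\<in>A k. poly (N k) x \<noteq> 0)" using hN by auto
  have "(\<exists>c n. \<forall>x\<in>A k. x ^ r * poly h x ^ (q - 1) = c * power_int x n) \<longleftrightarrow>
      (\<exists>c n. \<forall>x\<in>A k. x ^ r * poly (N k) x ^ (q - 1) = c * power_int x n)" if "k < d" for k
    using hN that by simp
  with nonvanishing have "(\<forall>y. y ^ (q + 1) = 1 \<longrightarrow> poly h y \<noteq> 0) \<and>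
        (\<forall>k<d. \<exists>c n. \<forall>x\<in>A k. x ^ r * poly h x ^ (q - 1) = c * power_int x n)
      \<longleftrightarrow> (\<forall>k<d. (\<forall>x\<in>A k. poly (N k) x \<noteq> 0) \<and>
          (\<exists>c n. \<forall>x\<in>A k. x ^ r * poly (N k) x ^ (q - 1) = c * power_int x n))"
    by auto
  also have "\<dots> \<longleftrightarrow> (\<forall>k<d. \<exists>s t p lam \<tau> L. reciprocal_decomposition (N k) k s t p lam \<tau> L)"
    using deg by (intro all_cong1 imp_cong refl monomial_on_A_iff_reciprocal_decomposition) auto
  also have "\<dots> \<longleftrightarrow> (\<exists>s t p lam \<tau> L.
      \<forall>k<d. reciprocal_decomposition (N k) k (s k) (t k) (p k) (lam k) (\<tau> k) (L k))"
    by metis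
  finally show ?thesis .
qed

lemma bij_iff_reciprocal_conditions:
  assumes "r > 0"
    and hN: "\<forall>k<d. \<forall>x\<in>A k. poly h x = poly (N k) x"
    and deg: "\<forall>k i. m \<le> i \<longrightarrow> coeff (N k) i = 0"
  shows "(bij (\<lambda>x. x ^ r * poly h (x ^ (q - 1))) \<and>
          (\<forall>k<d. \<exists>c n. \<forall>x\<in>A k. x ^ r * poly h x ^ (q - 1) = c * power_int x n))
    \<longleftrightarrow> (\<exists>s t p lam \<tau> L.
          (\<forall>k<d. reciprocal_decomposition (N k) k (s k) (t k) (p k) (lam k) (\<tau> k) (L k)) \<and>
          gcd r (q - 1) = 1 \<and> exponent_conditions r s t p \<tau>)"
    (is "?lhs \<longleftrightarrow> (\<exists>s t p lam \<tau> L. ?data s t p lam \<tau> L \<and> _)")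
proof
  assume ?lhs
  then have "(coprime r (q - 1) \<and> (\<forall>y. y ^ (q + 1) = 1 \<longrightarrow> poly h y \<noteq> 0) \<and>
      inj_on (\<lambda>y. y ^ r * poly h y ^ (q - 1)) {y. y ^ (q + 1) = 1}) \<and>
      (\<forall>k<d. \<exists>c n. \<forall>x\<in>A k. x ^ r * poly h x ^ (q - 1) = c * power_int x n)"
    unfolding zieve_criterion[OF \<open>r > 0\<close>] .
  then have gcd_r: "gcd r (q - 1) = 1"
    and inj: "inj_on (\<lambda>y. y ^ r * poly h y ^ (q - 1)) {y. y ^ (q + 1) = 1}"
    and local: "(\<forall>y. y ^ (q + 1) = 1 \<longrightarrow> poly h y \<noteq> 0) \<and>
      (\<forall>k<d. \<exists>c n. \<forall>x\<in>A k. x ^ r * poly h x ^ (q - 1) = c * power_int x n)"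
    by (auto simp: coprime_iff_gcd_eq_1)
  obtain s t p lam \<tau> L where data: "?data s t p lam \<tau> L"
    using local_forms_iff_reciprocal_decomposition[OF hN deg, THEN iffD1, OF local]
    by (elim exE) (rule that)
  have exponents: "exponent_conditions r s t p \<tau>"
    using inj_on_unit_circle_iff_exponent_conditions[OF data hN] inj by blast
  show "\<exists>s t p lam \<tau> L. ?data s t p lam \<tau> L \<and> gcd r (q - 1) = 1 \<and> exponent_conditions r s t p \<tau>"
    by (rule exI[of _ s], rule exI[of _ t], rule exI[of _ p], rule exI[of _ lam],
        rule exI[of _ \<tau>], rule exI[of _ L]) (intro conjI data gcd_r exponents)
next
  assume "\<exists>s t p lam \<tau> L. ?data s t p lam \<tau> L \<and> gcd r (q - 1) = 1 \<and> exponent_conditions r s t p \<tau>"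
  then obtain s t p lam \<tau> L where data: "?data s t p lam \<tau> L"
    and "gcd r (q - 1) = 1" "exponent_conditions r s t p \<tau>" by (elim exE conjE) (rule that)
  moreover have "\<exists>s t p lam \<tau> L. ?data s t p lam \<tau> L"
    by (rule exI[of _ s], rule exI[of _ t], rule exI[of _ p], rule exI[of _ lam], rule exI[of _ \<tau>],
        rule exI[of _ L]) (rule data)
  ultimately show ?lhs
    unfolding zieve_criterion[OF \<open>r > 0\<close>] coprime_iff_gcd_eq_1
    using local_forms_iff_reciprocal_decomposition[OF hN deg]
      inj_on_unit_circle_iff_exponent_conditions[OF data hN]
    by auto
qed

lemma poly_on_A_eq_reduced:
  assumes "x \<in> A k"
  shows "poly (\<Sum>i<m. \<Sum>j<d. monom (a i j) (i + j * m)) x =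
         poly (\<Sum>i<m. monom (\<Sum>j<d. a i j * eps ^ (j * k)) i) x"
proof -
  have "x ^ m = eps ^ k" using assms mem_A_iff by blast
  then have "x ^ (i + j * m) = eps ^ (j * k) * x ^ i" for i j
    by (metis mult.commute power_add power_mult)
  then show ?thesis by (simp add: poly_sum poly_monom sum_distrib_left algebra_simps)
qed

end

theorem theorem2p3:
  fixes q d r :: nat and eps :: "'a::{finite,field_gcd}" and a :: "nat \<Rightarrow> nat \<Rightarrow> 'a"
  assumes "is_prime_power q" and "CARD('a) = q ^ 2"
    and "d dvd q + 1" and "has_mult_order eps d" and "r > 0"
  defines "m \<equiv> (q + 1) div d"
  defines "h \<equiv> (\<Sum>i<m. \<Sum>j<d. monom (a i j) (i + j * m))"
  defines "M \<equiv> (\<lambda>i k. \<Sum>j<d. a i j * eps ^ (j * k))"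
  shows
   "(permutation_poly (monom 1 r * pcompose h (monom 1 (q - 1))) \<and>
     (\<forall>k<d. \<exists>c::'a. \<exists>n::int. \<forall>x\<in>Aset q d eps k.
          x ^ r * (poly h x) ^ (q - 1) = c * power_int x n))
    \<longleftrightarrow>
    (\<exists>(s::nat\<Rightarrow>nat) (t::nat\<Rightarrow>nat) (pp::nat\<Rightarrow>nat) (lam::nat\<Rightarrow>'a) (\<tau>::nat\<Rightarrow>nat) (L::nat\<Rightarrow>'a poly).
       (\<forall>k<d. s k + t k < m \<and> pp k < d \<and> lam k \<in> Aset q d eps (pp k) \<and>
              (\<tau> k = 0 \<or> (m - t k \<le> \<tau> k \<and> \<tau> k \<le> t k)) \<and>
              (\<Sum>i<m. monom (M i k) i) = monom 1 (s k) * L k \<and>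
              L k \<in> Lset q d eps k (t k) (\<tau> k) (lam k)) \<and>
       gcd r (q - 1) = 1 \<and>
       (\<forall>k<d. gcd (int r - 2 * int (s k) - int (t k) + int (\<tau> k)) (int m) = 1) \<and>
       bij_betw (\<lambda>k. (int (pp k) + (int r - 2 * int (s k) - int (t k) + int (\<tau> k)) * int k) mod int d)
         {..<d} {0..<int d})"
proof -
  interpret unit_circle_cosets q "TYPE('a)" d eps m
    by unfold_locales (use assms in \<open>simp_all add: m_def\<close>)
  have "\<forall>k<d. \<forall>x\<in>A k. poly h x = poly (\<Sum>i<m. monom (M i k) i) x"
    unfolding h_def M_def using poly_on_A_eq_reduced by blast
  moreover have "\<forall>k i. m \<le> i \<longrightarrow> coeff (\<Sum>i<m. monom (M i k) i) i = 0"
    by (simp add: coeff_sum)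
  moreover have "poly (monom 1 r * pcompose h (monom 1 (q - 1))) = (\<lambda>x. x ^ r * poly h (x ^ (q - 1)))"
    by (rule ext) (simp add: poly_pcompose poly_monom)
  ultimately show ?thesis
    using bij_iff_reciprocal_conditions[OF \<open>r > 0\<close>]
    unfolding permutation_poly_def reciprocal_decomposition_def exponent_conditions_def
    by simp
qed

end
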